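(* Let $n\ge 1$ and let $\mathcal{OCT}_n$ be the semigroup of all order-preserving full contractions of $[n]=\{1,\dots,n\}$. Let $\textnormal{Reg}(\mathcal{OCT}_n)$ be the set of regular elements of $\mathcal{OCT}_n$. Then $$|\textnormal{Reg}(\mathcal{OCT}_n)|=\frac{n(n-1)(2n-1)+6n}{6}.$$
   Context: $\mathcal{T}_n$ is the semigroup (under composition) of all maps $[n]\to[n]$. A map $\alpha\in\mathcal{T}_n$ is a contraction if $|x\alpha-y\alpha|\le |x-y|$ for all $x,y\in[n]$, and order-preserving if $x\le y$ implies $x\alpha\le y\alpha$. $\mathcal{OCT}_n$ is the set of order-preserving contractions, a subsemigroup of $\mathcal{T}_n$. An element $\alpha\in\mathcal{OCT}_n$ is regular if there is $\beta\in\mathcal{OCT}_n$ with $\alpha\beta\alpha=\alpha$. *)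

theory Defs
  imports Complex_Main "HOL-Library.FuncSet"
begin

definition T :: "nat \<Rightarrow> (nat \<Rightarrow> nat) set" where
  "T n = {1..n} \<rightarrow>\<^sub>E {1..n}"

text \<open>Composition written on the right: x(\<alpha>\<beta>) = (x\<alpha>)\<beta>.\<close>
definition tcomp :: "nat \<Rightarrow> (nat \<Rightarrow> nat) \<Rightarrow> (nat \<Rightarrow> nat) \<Rightarrow> (nat \<Rightarrow> nat)" where
  "tcomp n \<alpha> \<beta> = restrict (\<lambda>x. \<beta> (\<alpha> x)) {1..n}"

definition OCT :: "nat \<Rightarrow> (nat \<Rightarrow> nat) set" where
  "OCT n = {\<alpha> \<in> T n.
     (\<forall>x\<in>{1..n}. \<forall>y\<in>{1..n}. \<bar>int (\<alpha> x) - int (\<alpha> y)\<bar> \<le> \<bar>int x - int y\<bar>) \<and>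
     (\<forall>x\<in>{1..n}. \<forall>y\<in>{1..n}. x \<le> y \<longrightarrow> \<alpha> x \<le> \<alpha> y)}"

definition RegOCT :: "nat \<Rightarrow> (nat \<Rightarrow> nat) set" where
  "RegOCT n = {\<alpha> \<in> OCT n. \<exists>\<beta>\<in>OCT n. tcomp n (tcomp n \<alpha> \<beta>) \<alpha> = \<alpha>}"

end

theory Submission
  imports Defs
begin

text \<open>If \<alpha>\<beta>\<alpha> = \<alpha> with \<alpha>, \<beta> order-preserving contractions, then \<beta> is a right inverse of \<alpha>
  on the image of \<alpha>, which is an interval [a, a + d]. A contraction that is injective and
  increasing on an interval is a translation there, so \<alpha> maps p, p + 1, ..., p + d onto
  a, ..., a + d and, being monotone, is constant a before p and constant a + d after p + d.
  Conversely every such map is regular, with the map of the same shape but a and p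
  exchanged as inverse. For d = 0 these are the n constant maps; for
  d \<ge> 1 both a and p range over n - d values, giving n + 1 + 4 + ... + (n - 1)^2
  regular elements.\<close>

text \<open>Truncated subtraction makes the map constant a up to s; it then rises by one per step
  until it reaches a + d.\<close>
definition ramp :: "nat \<Rightarrow> nat \<Rightarrow> nat \<Rightarrow> nat \<Rightarrow> nat \<Rightarrow> nat" where
  "ramp n a d s = restrict (\<lambda>x. a + min d (x - s)) {1..n}"

lemma ramp_apply: "x \<in> {1..n} \<Longrightarrow> ramp n a d s x = a + min d (x - s)"
  unfolding ramp_def by simp

lemma ramp_flat: "ramp n a 0 s = ramp n a 0 1"
  unfolding ramp_def by simp

lemma tcomp_apply: "x \<in> {1..n} \<Longrightarrow> tcomp n \<alpha> \<beta> x = \<beta> (\<alpha> x)"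
  unfolding tcomp_def by simp

lemma OCT_extensional: "\<alpha> \<in> OCT n \<Longrightarrow> \<alpha> \<in> extensional {1..n}"
  unfolding OCT_def T_def by (simp add: PiE_def)

lemma OCT_range: "\<alpha> \<in> OCT n \<Longrightarrow> x \<in> {1..n} \<Longrightarrow> \<alpha> x \<in> {1..n}"
  unfolding OCT_def T_def by auto

lemma OCT_mono: "\<alpha> \<in> OCT n \<Longrightarrow> x \<in> {1..n} \<Longrightarrow> y \<in> {1..n} \<Longrightarrow> x \<le> y \<Longrightarrow> \<alpha> x \<le> \<alpha> y"
  unfolding OCT_def by auto

lemma OCT_contraction:
  "\<alpha> \<in> OCT n \<Longrightarrow> x \<in> {1..n} \<Longrightarrow> y \<in> {1..n} \<Longrightarrow> \<bar>int (\<alpha> x) - int (\<alpha> y)\<bar> \<le> \<bar>int x - int y\<bar>"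
  unfolding OCT_def by auto

lemma ramp_in_OCT:
  assumes "1 \<le> a" "a + d \<le> n" "1 \<le> s" "s + d \<le> n"
  shows "ramp n a d s \<in> OCT n"
  using assms unfolding OCT_def T_def ramp_def by (auto simp: min_def PiE_def)

lemma ramp_regular:
  assumes "1 \<le> a" "a + d \<le> n" "1 \<le> s" "s + d \<le> n"
  shows "tcomp n (tcomp n (ramp n a d s) (ramp n s d a)) (ramp n a d s) = ramp n a d s"
proof (rule extensionalityI)
  show "tcomp n (tcomp n (ramp n a d s) (ramp n s d a)) (ramp n a d s) \<in> extensional {1..n}"
    and "ramp n a d s \<in> extensional {1..n}"
    unfolding tcomp_def ramp_def by simp_all
next
  fix x :: nat
  assume x: "x \<in> {1..n}"
  have "a + min d (x - s) \<in> {1..n}" and "s + min d (x - s) \<in> {1..n}"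
    using assms by auto
  then show "tcomp n (tcomp n (ramp n a d s) (ramp n s d a)) (ramp n a d s) x = ramp n a d s x"
    using x by (simp add: tcomp_apply ramp_apply)
qed

lemma ramp_in_RegOCT:
  assumes "1 \<le> a" "a + d \<le> n" "1 \<le> s" "s + d \<le> n"
  shows "ramp n a d s \<in> RegOCT n"
  unfolding RegOCT_def
  using assms ramp_in_OCT[OF assms] ramp_in_OCT[of s d n a] ramp_regular[OF assms] by auto

lemma OCT_attains_intermediate:
  assumes "\<alpha> \<in> OCT n" "1 \<le> n" "\<alpha> 1 \<le> y" "y \<le> \<alpha> n"
  shows "\<exists>x\<in>{1..n}. \<alpha> x = y"
proof -
  have "\<forall>i. 1 \<le> i \<and> i < n \<longrightarrow> \<bar>int (\<alpha> (Suc i)) - int (\<alpha> i)\<bar> \<le> 1"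
  proof (intro allI impI)
    fix i
    assume "1 \<le> i \<and> i < n"
    then show "\<bar>int (\<alpha> (Suc i)) - int (\<alpha> i)\<bar> \<le> 1"
      using OCT_contraction[OF assms(1), of "Suc i" i] by simp
  qed
  from nat_intermed_int_val[OF this, of "int y"] assms(2-4)
  show ?thesis by auto
qed

lemma regular_OCT_right_inverse:
  assumes "\<alpha> \<in> OCT n" "1 \<le> n" "tcomp n (tcomp n \<alpha> \<beta>) \<alpha> = \<alpha>" "y \<in> {\<alpha> 1..\<alpha> n}"
  shows "\<alpha> (\<beta> y) = y"
proof -
  obtain x where x: "x \<in> {1..n}" "\<alpha> x = y"
    using OCT_attains_intermediate assms by (metis atLeastAtMost_iff)
  have "tcomp n (tcomp n \<alpha> \<beta>) \<alpha> x = \<alpha> x"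
    using assms(3) by simp
  then show ?thesis
    using x OCT_range[OF assms(1) x(1)] by (simp add: tcomp_apply)
qed

text \<open>\<beta> cannot decrease on the interval because \<alpha> undoes it monotonically, and being a
  contraction it cannot jump by more than one.\<close>
lemma right_inverse_is_translation:
  assumes "\<alpha> \<in> OCT n" "\<beta> \<in> OCT n" "1 \<le> a" "a + d \<le> n"
    and inv: "\<And>y. y \<in> {a..a + d} \<Longrightarrow> \<alpha> (\<beta> y) = y"
  shows "k \<le> d \<Longrightarrow> \<beta> (a + k) = \<beta> a + k"
proof (induction k)
  case (Suc k)
  have y: "a + k \<in> {1..n}" "a + Suc k \<in> {1..n}"
    using Suc.prems assms(3,4) by auto
  have "\<beta> (a + k) < \<beta> (a + Suc k)"
  proof (rule ccontr)
    assume "\<not> ?thesis"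
    then have "\<alpha> (\<beta> (a + Suc k)) \<le> \<alpha> (\<beta> (a + k))"
      using OCT_mono[OF assms(1)] OCT_range[OF assms(2)] y by simp
    then show False
      using inv[of "a + k"] inv[of "a + Suc k"] Suc.prems by simp
  qed
  moreover have "\<bar>int (\<beta> (a + Suc k)) - int (\<beta> (a + k))\<bar> \<le> 1"
    using OCT_contraction[OF assms(2) y(2) y(1)] by simp
  ultimately show ?case
    using Suc by simp
qed simp

lemma OCT_eq_ramp:
  assumes "\<alpha> \<in> OCT n" "1 \<le> p" "p + d \<le> n" "\<alpha> n = \<alpha> 1 + d"
    and rise: "\<And>k. k \<le> d \<Longrightarrow> \<alpha> (p + k) = \<alpha> 1 + k"
  shows "\<alpha> = ramp n (\<alpha> 1) d p"
proof (rule extensionalityI[OF OCT_extensional[OF assms(1)]])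
  show "ramp n (\<alpha> 1) d p \<in> extensional {1..n}"
    unfolding ramp_def by simp
next
  fix x :: nat
  assume x: "x \<in> {1..n}"
  have mono: "\<And>u v. u \<in> {1..n} \<Longrightarrow> v \<in> {1..n} \<Longrightarrow> u \<le> v \<Longrightarrow> \<alpha> u \<le> \<alpha> v"
    using OCT_mono[OF assms(1)] by blast
  consider "x \<le> p" | "p \<le> x" "x \<le> p + d" | "p + d \<le> x"
    by linarith
  then show "\<alpha> x = ramp n (\<alpha> 1) d p x"
  proof cases
    case 1
    then show ?thesis
      using mono[of 1 x] mono[of x p] rise[of 0] x assms(2,3) by (simp add: ramp_apply)
  next
    case 2
    then show ?thesis
      using rise[of "x - p"] x by (simp add: ramp_apply)
  next
    case 3
    then show ?thesis
      using mono[of "p + d" x] mono[of x n] rise[of d] x assms(2,4) by (simp add: ramp_apply)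
  qed
qed

text \<open>For d = 0 the start s is irrelevant, so it is normalised to 1.\<close>
definition ramp_params :: "nat \<Rightarrow> (nat \<times> nat \<times> nat) set" where
  "ramp_params n = {(d, a, s). 1 \<le> a \<and> a + d \<le> n \<and> 1 \<le> s \<and> s + d \<le> n \<and> (d = 0 \<longrightarrow> s = 1)}"

lemma RegOCT_imp_ramp:
  assumes "\<alpha> \<in> RegOCT n" "1 \<le> n"
  shows "\<exists>(d, a, s) \<in> ramp_params n. \<alpha> = ramp n a d s"
proof -
  obtain \<beta> where \<alpha>: "\<alpha> \<in> OCT n" and \<beta>: "\<beta> \<in> OCT n" and reg: "tcomp n (tcomp n \<alpha> \<beta>) \<alpha> = \<alpha>"
    using assms(1) unfolding RegOCT_def by blast
  define a where "a = \<alpha> 1"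
  define d where "d = \<alpha> n - \<alpha> 1"
  define p where "p = \<beta> a"
  have a: "1 \<le> a" "a + d \<le> n" and \<alpha>n: "\<alpha> n = a + d"
    using OCT_range[OF \<alpha>] OCT_mono[OF \<alpha>, of 1 n] assms(2) unfolding a_def d_def by auto
  have inv: "\<alpha> (\<beta> y) = y" if "y \<in> {a..a + d}" for y
    using regular_OCT_right_inverse[OF \<alpha> assms(2) reg] that \<alpha>n unfolding a_def by simp
  have shift: "\<beta> (a + k) = p + k" if "k \<le> d" for k
    using right_inverse_is_translation[OF \<alpha> \<beta> a inv that] unfolding p_def .
  have p: "1 \<le> p" "p + d \<le> n"
    using OCT_range[OF \<beta>, of a] OCT_range[OF \<beta>, of "a + d"] shift[of d] a unfolding p_def by auto
  have "\<alpha> (p + k) = a + k" if "k \<le> d" for k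
    using inv[of "a + k"] shift[OF that] that by simp
  then have "\<alpha> = ramp n a d p"
    using OCT_eq_ramp[OF \<alpha> p] \<alpha>n unfolding a_def by blast
  show ?thesis
  proof (cases "d = 0")
    case True
    have "(0, a, 1) \<in> ramp_params n"
      using a unfolding ramp_params_def by simp
    with \<open>\<alpha> = ramp n a d p\<close> True ramp_flat show ?thesis by fastforce
  next
    case False
    have "(d, a, p) \<in> ramp_params n"
      using a p False unfolding ramp_params_def by simp
    with \<open>\<alpha> = ramp n a d p\<close> show ?thesis by fastforce
  qed
qed

lemma RegOCT_eq_ramps:
  assumes "1 \<le> n"
  shows "RegOCT n = (\<lambda>(d, a, s). ramp n a d s) ` ramp_params n"
proof
  show "RegOCT n \<subseteq> (\<lambda>(d, a, s). ramp n a d s) ` ramp_params n"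
  proof
    fix \<alpha>
    assume "\<alpha> \<in> RegOCT n"
    with RegOCT_imp_ramp[OF this assms] show "\<alpha> \<in> (\<lambda>(d, a, s). ramp n a d s) ` ramp_params n"
      by force
  qed
  show "(\<lambda>(d, a, s). ramp n a d s) ` ramp_params n \<subseteq> RegOCT n"
    using ramp_in_RegOCT unfolding ramp_params_def by auto
qed

lemma ramp_params_determined:
  assumes "(d, a, s) \<in> ramp_params n" "(d', a', s') \<in> ramp_params n"
    and eq: "ramp n a d s = ramp n a' d' s'"
  shows "(d, a, s) = (d', a', s')"
proof -
  have p: "1 \<le> a" "a + d \<le> n" "1 \<le> s" "s + d \<le> n" "d = 0 \<longrightarrow> s = 1"
    and p': "1 \<le> a'" "a' + d' \<le> n" "1 \<le> s'" "s' + d' \<le> n" "d' = 0 \<longrightarrow> s' = 1"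
    using assms(1,2) unfolding ramp_params_def by auto
  have "a = a'"
    using fun_cong[OF eq, of 1] p p' by (simp add: ramp_apply)
  moreover have "d = d'"
    using fun_cong[OF eq, of n] p p' \<open>a = a'\<close> by (simp add: ramp_apply)
  moreover have "s = s'"
  proof (cases "d = 0")
    case True
    then show ?thesis using p p' \<open>d = d'\<close> by simp
  next
    case False
    have "ramp n a d t (Suc t) = Suc a" if "1 \<le> t" "t + d \<le> n" for t
      using that False by (simp add: ramp_apply)
    moreover have "ramp n a d t (Suc u) = a" if "1 \<le> t" "t + d \<le> n" "u < t" for t u
      using that by (simp add: ramp_apply)
    \<comment> \<open>Just after the earlier start, only the earlier ramp has risen.\<close>
    ultimately have "\<not> s < s'" "\<not> s' < s"
      using fun_cong[OF eq, of "Suc s"] fun_cong[OF eq, of "Suc s'"] p p' \<open>a = a'\<close> \<open>d = d'\<close>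
      by (metis n_not_Suc_n)+
    then show ?thesis by simp
  qed
  ultimately show ?thesis by simp
qed

lemma inj_on_ramp: "inj_on (\<lambda>(d, a, s). ramp n a d s) (ramp_params n)"
  by (rule inj_onI) (use ramp_params_determined in fastforce)

lemma card_ramp_params: "card (ramp_params n) = n + (\<Sum>j<n. j\<^sup>2)"
proof -
  have "ramp_params n = ({0} \<times> {1..n} \<times> {1}) \<union> (SIGMA d:{1..<n}. {1..n - d} \<times> {1..n - d})"
    unfolding ramp_params_def by auto
  then have "card (ramp_params n) = card ({0::nat} \<times> {1..n} \<times> {1::nat})
      + card (SIGMA d:{1..<n}. {1..n - d} \<times> {1..n - d})"
    by (simp only:) (rule card_Un_disjoint, auto)
  also have "\<dots> = n + (\<Sum>d\<in>{1..<n}. (n - d)\<^sup>2)"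
    by (simp add: card_cartesian_product power2_eq_square)
  also have "(\<Sum>d\<in>{1..<n}. (n - d)\<^sup>2) = (\<Sum>j\<in>{1..<n}. j\<^sup>2)"
    using sum.atLeastLessThan_rev[of "\<lambda>j. j\<^sup>2" 1 n] by simp
  also have "\<dots> = (\<Sum>j<n. j\<^sup>2)"
    by (rule sum.mono_neutral_left) auto
  finally show ?thesis .
qed

lemma sum_squares_lessThan: "real (\<Sum>j<n. j\<^sup>2) = real n * (real n - 1) * (2 * real n - 1) / 6"
  by (induction n) (auto simp: algebra_simps power2_eq_square)

theorem theorem2:
  fixes n :: nat
  assumes "n \<ge> 1"
  shows "real (card (RegOCT n)) = (real n * (real n - 1) * (2 * real n - 1) + 6 * real n) / 6"
proof -
  have "card (RegOCT n) = card (ramp_params n)"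
    using RegOCT_eq_ramps[OF assms] card_image[OF inj_on_ramp] by simp
  then have "real (card (RegOCT n)) = real n + real (\<Sum>j<n. j\<^sup>2)"
    by (simp add: card_ramp_params)
  then show ?thesis
    using sum_squares_lessThan[of n] by (simp add: field_simps)
qed

end
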